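(* Let $n\ge0$ and $\boldsymbol\mu\in\mathcal{P}(\Phi)$, and suppose $k=\|\boldsymbol\mu\|+\ell(\boldsymbol\mu^e)\le n$. Then the centralizer $\mathcal A_{\boldsymbol\mu^{\uparrow n}}$ of $J_{\boldsymbol\mu^{\uparrow n}}$ in $G_n$ is $$\mathcal A_{\boldsymbol\mu^{\uparrow n}}=\left\{\begin{bmatrix}A&B\\C&D\end{bmatrix}\ \middle|\ A\in\mathcal A_{\boldsymbol\mu^{\uparrow k}},\ D\in G_{n-k},\ J_{\boldsymbol\mu^{\uparrow k}}B=B,\ CJ_{\boldsymbol\mu^{\uparrow k}}=C\right\},$$ where the block decomposition is of size $(k\,|\,n-k)$ and $\mathcal A_{\boldsymbol\mu^{\uparrow k}}$ is the centralizer of $J_{\boldsymbol\mu^{\uparrow k}}$ in $G_k$.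
   Context: $q$ is a prime power, $G_n=GL_n(\mathbb F_q)$. $\Phi$ is the set of monic irreducible polynomials in $\mathbb F_q[t]$ other than $t$, $d(f)$ the degree of $f$; $\mathcal{P}(\Phi)$ is the set of finitely supported maps $\boldsymbol\lambda$ from $\Phi$ to partitions, $\|\boldsymbol\lambda\|=\sum_f d(f)|\boldsymbol\lambda(f)|$, $\boldsymbol\lambda^e=\boldsymbol\lambda(t-1)$, $\ell$ = number of nonzero parts. For $f=t^d-\sum_{i=1}^d a_it^{i-1}\in\Phi$, $J(f)$ is the $d\times d$ companion matrix with $1$'s on the superdiagonal, last row $(a_1,\dots,a_d)$ and zeros elsewhere; $J_m(f)$ is the $dm\times dm$ block upper triangular matrix with $m$ diagonal blocks $J(f)$, blocks $I_d$ on the block superdiagonal, and zeros elsewhere. For $\boldsymbol\lambda\in\mathcal{P}(\Phi)$, $J_{\boldsymbol\lambda}$ is the block diagonal matrix with blocks $J_{\boldsymbol\lambda_i(f)}(f)$ over all $f$ and $i$, arranged with the blocks for $f\ne t-1$ first and then the blocks for $f=t-1$ in nonincreasing order of part size. For $\boldsymbol\mu\in\mathcal{P}(\Phi)$ with $r=\ell(\boldsymbol\mu^e)$ and $n\ge\|\boldsymbol\mu\|+r$, define $\boldsymbol\mu^{\uparrow n}\in\mathcal{P}(\Phi)$ by $\boldsymbol\mu^{\uparrow n}(f)=\boldsymbol\mu(f)$ for $f\ne t-1$ and $\boldsymbol\mu^{\uparrow n}(t-1)=(\boldsymbol\mu^e_1+1,\dots,\boldsymbol\mu^e_r+1,1,\dots,1)$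 with $n-r-\|\boldsymbol\mu\|$ trailing ones; then $J_{\boldsymbol\mu^{\uparrow n}}\in G_n$. *)

theory Defs
  imports "Jordan_Normal_Form.Matrix" "HOL-Computational_Algebra.Polynomial"
    "HOL-Computational_Algebra.Polynomial_Factorial"
begin

text \<open>The field F_q is modelled by an arbitrary finite field type 'a.\<close>

definition Phi :: "'a::{field,finite} poly set" where
  "Phi = {f. lead_coeff f = 1 \<and> irreducible f \<and> f \<noteq> [:0, 1:]}"

abbreviation tm1 :: "'a::{field,finite} poly" where
  "tm1 \<equiv> [:-1, 1:]"

definition is_partition :: "nat list \<Rightarrow> bool" where
  "is_partition xs \<longleftrightarrow> sorted_wrt (\<ge>) xs \<and> 0 \<notin> set xs"

definition supp :: "('a::{field,finite} poly \<Rightarrow> nat list) \<Rightarrow> 'a poly set" where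
  "supp lam = {f. lam f \<noteq> []}"

definition PPhi :: "('a::{field,finite} poly \<Rightarrow> nat list) set" where
  "PPhi = {lam. finite (supp lam) \<and> supp lam \<subseteq> Phi \<and> (\<forall>f. is_partition (lam f))}"

definition pnorm :: "('a::{field,finite} poly \<Rightarrow> nat list) \<Rightarrow> nat" where
  "pnorm lam = (\<Sum>f\<in>supp lam. degree f * sum_list (lam f))"

text \<open>Companion matrix J(f), f = t^d - sum a_i t^(i-1), so a_i = - coeff f (i-1).\<close>
definition companion :: "'a::{field,finite} poly \<Rightarrow> 'a mat" where
  "companion f = (let d = degree f in
     mat d d (\<lambda>(i,j). if i + 1 = d then - coeff f j else if j = i + 1 then 1 else 0))"

definition jblock :: "'a::{field,finite} poly \<Rightarrow> nat \<Rightarrow> 'a mat" where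
  "jblock f m = (let d = degree f in
     mat (d*m) (d*m) (\<lambda>(i,j).
       if i div d = j div d then companion f $$ (i mod d, j mod d)
       else if j div d = i div d + 1 then (if i mod d = j mod d then 1 else 0)
       else 0))"

definition nonunip_list :: "('a::{field,finite} poly \<Rightarrow> nat list) \<Rightarrow> 'a poly list" where
  "nonunip_list lam = (SOME xs. distinct xs \<and> set xs = supp lam - {tm1})"

definition Jmat :: "('a::{field,finite} poly \<Rightarrow> nat list) \<Rightarrow> 'a mat" where
  "Jmat lam = diag_block_mat
     (concat (map (\<lambda>f. map (jblock f) (lam f)) (nonunip_list lam))
      @ map (jblock tm1) (rev (sort (lam tm1))))"

definition up :: "nat \<Rightarrow> ('a::{field,finite} poly \<Rightarrow> nat list) \<Rightarrow> ('a poly \<Rightarrow> nat list)" where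
  "up n mu = mu(tm1 := map Suc (mu tm1) @ replicate (n - length (mu tm1) - pnorm mu) 1)"

definition GL :: "nat \<Rightarrow> 'a::{field,finite} mat set" where
  "GL n = {A. A \<in> carrier_mat n n \<and> invertible_mat A}"

definition centralizer :: "nat \<Rightarrow> 'a::{field,finite} mat \<Rightarrow> 'a mat set" where
  "centralizer n M = {A \<in> GL n. A * M = M * A}"

end

theory Submission
  imports Defs "Jordan_Normal_Form.Determinant"
begin

text \<open>Write \<open>J\<close> for \<open>J\<^bsub>\<mu>\<up>k\<^esub>\<close>. Then \<open>J\<^bsub>\<mu>\<up>n\<^esub> = diag(J, 1)\<close>, and \<open>J\<close> has no Jordan block of
  size \<open>1\<close> at the eigenvalue \<open>1\<close>: its blocks for \<open>f \<noteq> t - 1\<close> have \<open>J\<^sub>m(f) - 1\<close> invertible because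
  \<open>f(1) \<noteq> 0\<close>, and its unipotent blocks have size \<open>\<mu>\<^sup>e\<^sub>i + 1 \<ge> 2\<close>. Hence \<open>ker (J - 1) \<subseteq> im (J - 1)\<close>,
  so \<open>C B = 0\<close> whenever \<open>C J = C\<close> and \<open>J B = B\<close>. A block matrix \<open>X = [A B; C D]\<close> commutes with
  \<open>diag(J, 1)\<close> iff \<open>A J = J A\<close>, \<open>J B = B\<close> and \<open>C J = C\<close>. If \<open>X\<close> is invertible, so is its inverse
  \<open>[A' B'; C' D']\<close>, which also commutes with \<open>diag(J, 1)\<close>; then \<open>C B' = 0 = C' B\<close>, so \<open>D D' = 1\<close> and
  \<open>A A' = 1 - B C'\<close> with \<open>(B C')\<^sup>2 = 0\<close>, and \<open>A\<close>, \<open>D\<close> are invertible. Conversely, if \<open>A\<close> and \<open>D\<close>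
  are invertible then \<open>C A\<^sup>-\<^sup>1 B = 0\<close>, so \<open>det X = det A * det D \<noteq> 0\<close>.\<close>

section \<open>Invertibility and block matrices\<close>

lemma invertible_mat_iff_det_nonzero:
  fixes A :: "'a::field mat"
  assumes A: "A \<in> carrier_mat n n"
  shows "invertible_mat A \<longleftrightarrow> det A \<noteq> 0"
proof
  assume "invertible_mat A"
  then obtain B where AB: "A * B = 1\<^sub>m n" and BA: "B * A = 1\<^sub>m (dim_row B)"
    using A unfolding invertible_mat_def inverts_mat_def by auto
  then have B: "B \<in> carrier_mat n n"
    using A by (metis carrier_matD(2) carrier_matI index_mult_mat(2,3) index_one_mat(2,3))
  have "det A * det B = 1" using det_mult[OF A B] AB by simp
  then show "det A \<noteq> 0" by auto
next
  assume "det A \<noteq> 0"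
  from det_non_zero_imp_unit[OF A this, of "()"]
  obtain B where "B \<in> carrier_mat n n" "B * A = 1\<^sub>m n" "A * B = 1\<^sub>m n"
    unfolding Units_def ring_mat_def by auto
  then show "invertible_mat A"
    using A unfolding invertible_mat_def inverts_mat_def by auto
qed

lemma GL_iff_det: "A \<in> GL n \<longleftrightarrow> A \<in> carrier_mat n n \<and> det A \<noteq> 0"
  unfolding GL_def using invertible_mat_iff_det_nonzero by blast

lemma inverse_mat_exists:
  fixes X :: "'a::field mat"
  assumes "X \<in> carrier_mat n n" and "det X \<noteq> 0"
  obtains Y where "Y \<in> carrier_mat n n" "X * Y = 1\<^sub>m n" "Y * X = 1\<^sub>m n"
  using det_non_zero_imp_unit[OF assms, of "()"] that unfolding Units_def ring_mat_def by auto

lemma commute_inverse_mat: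
  fixes X :: "'a::comm_ring_1 mat"
  assumes X: "X \<in> carrier_mat n n" and Y: "Y \<in> carrier_mat n n" and J: "J \<in> carrier_mat n n"
    and XY: "X * Y = 1\<^sub>m n" and YX: "Y * X = 1\<^sub>m n" and XJ: "X * J = J * X"
  shows "Y * J = J * Y"
proof -
  have "Y * J = Y * J * (X * Y)" using XY Y J by simp
  also have "\<dots> = Y * (X * J) * Y"
    using X Y J by (simp add: assoc_mult_mat[of _ n n _ n _ n] XJ)
  also have "\<dots> = (Y * X) * (J * Y)"
    using X Y J by (simp add: assoc_mult_mat[of _ n n _ n _ n])
  also have "\<dots> = J * Y" using YX Y J by simp
  finally show ?thesis .
qed

lemma det_one_minus_square_zero:
  fixes E :: "'a::comm_ring_1 mat"
  assumes E: "E \<in> carrier_mat k k" and EE: "E * E = 0\<^sub>m k k"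
  shows "det (1\<^sub>m k - E) \<noteq> 0"
proof -
  have "(1\<^sub>m k - E) * (1\<^sub>m k + E) = (1\<^sub>m k - E) * 1\<^sub>m k + (1\<^sub>m k - E) * E"
    using E by (subst mult_add_distrib_mat[of _ k k]) auto
  also have "\<dots> = (1\<^sub>m k - E) + (E - E * E)"
    using E by (subst minus_mult_distrib_mat[of _ k k]) auto
  also have "\<dots> = 1\<^sub>m k" unfolding EE using E by (intro eq_matI) auto
  finally have "(1\<^sub>m k - E) * (1\<^sub>m k + E) = 1\<^sub>m k" .
  moreover have "1\<^sub>m k - E \<in> carrier_mat k k" "1\<^sub>m k + E \<in> carrier_mat k k" using E by auto
  ultimately have "det (1\<^sub>m k - E) * det (1\<^sub>m k + E) = 1" by (metis det_mult det_one)
  then show ?thesis by auto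
qed

lemma four_block_mat_inject:
  assumes "A \<in> carrier_mat nr1 nc1" "A' \<in> carrier_mat nr1 nc1"
    and "B \<in> carrier_mat nr1 nc2" "B' \<in> carrier_mat nr1 nc2"
    and "C \<in> carrier_mat nr2 nc1" "C' \<in> carrier_mat nr2 nc1"
    and "D \<in> carrier_mat nr2 nc2" "D' \<in> carrier_mat nr2 nc2"
    and eq: "four_block_mat A B C D = four_block_mat A' B' C' D'"
  shows "A = A' \<and> B = B' \<and> C = C' \<and> D = D'"
proof -
  have e: "four_block_mat A B C D $$ (i, j) = four_block_mat A' B' C' D' $$ (i, j)" for i j
    using eq by simp
  note dims = assms(1-8)
  show ?thesis
  proof (intro conjI eq_matI)
    fix i j
    show "i < dim_row A' \<Longrightarrow> j < dim_col A' \<Longrightarrow> A $$ (i, j) = A' $$ (i, j)"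
      using e[of i j] dims by auto
    show "i < dim_row B' \<Longrightarrow> j < dim_col B' \<Longrightarrow> B $$ (i, j) = B' $$ (i, j)"
      using e[of i "j + nc1"] dims by auto
    show "i < dim_row C' \<Longrightarrow> j < dim_col C' \<Longrightarrow> C $$ (i, j) = C' $$ (i, j)"
      using e[of "i + nr1" j] dims by auto
    show "i < dim_row D' \<Longrightarrow> j < dim_col D' \<Longrightarrow> D $$ (i, j) = D' $$ (i, j)"
      using e[of "i + nr1" "j + nc1"] dims by auto
  qed (use dims in auto)
qed

lemma four_block_commute_diag_one_iff:
  fixes J :: "'a::semiring_1 mat"
  assumes J: "J \<in> carrier_mat k k"
    and A: "A \<in> carrier_mat k k" and B: "B \<in> carrier_mat k m"
    and C: "C \<in> carrier_mat m k" and D: "D \<in> carrier_mat m m"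
  shows "four_block_mat A B C D * four_block_mat J (0\<^sub>m k m) (0\<^sub>m m k) (1\<^sub>m m) =
         four_block_mat J (0\<^sub>m k m) (0\<^sub>m m k) (1\<^sub>m m) * four_block_mat A B C D
    \<longleftrightarrow> A * J = J * A \<and> J * B = B \<and> C * J = C"
proof -
  have "four_block_mat A B C D * four_block_mat J (0\<^sub>m k m) (0\<^sub>m m k) (1\<^sub>m m)
     = four_block_mat (A * J) B (C * J) D"
    by (subst mult_four_block_mat[OF A B C D J], insert A B C D J, auto)
  moreover have "four_block_mat J (0\<^sub>m k m) (0\<^sub>m m k) (1\<^sub>m m) * four_block_mat A B C D
     = four_block_mat (J * A) (J * B) C D"
    by (subst mult_four_block_mat[OF J _ _ _ A B C D], insert A B C D J, auto)
  ultimately show ?thesis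
    using four_block_mat_inject[of "A * J" k k "J * A" B m "J * B" "C * J" m C D D] A B C D J
    by auto
qed

lemma det_four_block_mat_schur_zero:
  fixes A :: "'a::idom mat"
  assumes A: "A \<in> carrier_mat k k" and A': "A' \<in> carrier_mat k k" and A'A: "A' * A = 1\<^sub>m k"
    and B: "B \<in> carrier_mat k m" and C: "C \<in> carrier_mat m k" and D: "D \<in> carrier_mat m m"
    and CA'B: "C * A' * B = 0\<^sub>m m m"
  shows "det (four_block_mat A B C D) = det A * det D"
proof -
  have CA': "C * A' \<in> carrier_mat m k" using C A' by auto
  have "four_block_mat (1\<^sub>m k) (0\<^sub>m k m) (C * A') (1\<^sub>m m) * four_block_mat A B (0\<^sub>m m k) D
    = four_block_mat (1\<^sub>m k * A + 0\<^sub>m k m * 0\<^sub>m m k) (1\<^sub>m k * B + 0\<^sub>m k m * D)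
        (C * A' * A + 1\<^sub>m m * 0\<^sub>m m k) (C * A' * B + 1\<^sub>m m * D)"
    by (rule mult_four_block_mat[OF _ _ CA' _ A B _ D]) auto
  also have "\<dots> = four_block_mat A B C D"
    using A B C D A' A'A CA'B by simp
  finally have LU: "four_block_mat (1\<^sub>m k) (0\<^sub>m k m) (C * A') (1\<^sub>m m) * four_block_mat A B (0\<^sub>m m k) D
    = four_block_mat A B C D" .
  have "det (four_block_mat A B C D) = det (four_block_mat (1\<^sub>m k) (0\<^sub>m k m) (C * A') (1\<^sub>m m))
    * det (four_block_mat A B (0\<^sub>m m k) D)"
    unfolding LU[symmetric] by (rule det_mult[of _ "k + m"]) (use A B D CA' in auto)
  then show ?thesis
    using det_four_block_mat_lower_left_zero[OF A B refl D]
      det_four_block_mat_upper_right_zero[of "1\<^sub>m k" k "0\<^sub>m k m" m "C * A'" "1\<^sub>m m"] CA'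
    by simp
qed

section \<open>Matrices without a trivial Jordan block at \<open>1\<close>\<close>

text \<open>The witnesses \<open>Q\<close>, \<open>R\<close> certify \<open>ker (M - 1) \<subseteq> im (M - 1)\<close>, i.e. that \<open>1\<close> is not the
  eigenvalue of a Jordan block of size \<open>1\<close> of \<open>M\<close>. This is what forces \<open>C * B = 0\<close> whenever
  \<open>C * M = C\<close> and \<open>M * B = B\<close>.\<close>
definition no_trivial_block_at_one :: "'a::field mat \<Rightarrow> bool" where
  "no_trivial_block_at_one M \<longleftrightarrow> (\<exists>n Q R. M \<in> carrier_mat n n \<and>
     Q \<in> carrier_mat n n \<and> R \<in> carrier_mat n n \<and> (M - 1\<^sub>m n) * Q + R * (M - 1\<^sub>m n) = 1\<^sub>m n)"

lemma fixed_mult_eq_zero: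
  fixes J :: "'a::field mat"
  assumes nt: "no_trivial_block_at_one J" and J: "J \<in> carrier_mat k k"
    and C: "C \<in> carrier_mat m k" and B: "B \<in> carrier_mat k m'"
    and CJ: "C * J = C" and JB: "J * B = B"
  shows "C * B = 0\<^sub>m m m'"
proof -
  obtain Q R where Q: "Q \<in> carrier_mat k k" and R: "R \<in> carrier_mat k k"
    and QR: "(J - 1\<^sub>m k) * Q + R * (J - 1\<^sub>m k) = 1\<^sub>m k"
    using nt J unfolding no_trivial_block_at_one_def by auto
  define N where "N = J - 1\<^sub>m k"
  have N: "N \<in> carrier_mat k k" using J unfolding N_def by auto
  have CN: "C * N = 0\<^sub>m m k"
    unfolding N_def using C J CJ by (simp add: mult_minus_distrib_mat[OF C J one_carrier_mat])
  have NB: "N * B = 0\<^sub>m k m'"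
    unfolding N_def using B J JB by (simp add: minus_mult_distrib_mat[OF J one_carrier_mat B])
  have "C * B = C * ((N * Q + R * N) * B)" using QR B unfolding N_def by simp
  also have "\<dots> = C * (N * (Q * B)) + C * (R * (N * B))"
    using N Q R B C
    by (subst add_mult_distrib_mat[of _ k k], auto, subst mult_add_distrib_mat[OF C], auto)
  also have "\<dots> = (C * N) * (Q * B) + (C * R) * (N * B)"
    using N Q R B C by (simp add: assoc_mult_mat[of _ m k _ k _ m'])
  also have "\<dots> = 0\<^sub>m m m'" using CN NB Q B C R by simp
  finally show ?thesis .
qed

lemma no_trivial_block_at_one_four_block_diag:
  fixes M1 :: "'a::field mat"
  assumes "no_trivial_block_at_one M1" and "no_trivial_block_at_one M2"
  shows "no_trivial_block_at_one
    (four_block_mat M1 (0\<^sub>m (dim_row M1) (dim_col M2)) (0\<^sub>m (dim_row M2) (dim_col M1)) M2)"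
proof -
  obtain d1 Q1 R1 where M1: "M1 \<in> carrier_mat d1 d1" and Q1: "Q1 \<in> carrier_mat d1 d1"
    and R1: "R1 \<in> carrier_mat d1 d1" and e1: "(M1 - 1\<^sub>m d1) * Q1 + R1 * (M1 - 1\<^sub>m d1) = 1\<^sub>m d1"
    using assms(1) unfolding no_trivial_block_at_one_def by blast
  obtain d2 Q2 R2 where M2: "M2 \<in> carrier_mat d2 d2" and Q2: "Q2 \<in> carrier_mat d2 d2"
    and R2: "R2 \<in> carrier_mat d2 d2" and e2: "(M2 - 1\<^sub>m d2) * Q2 + R2 * (M2 - 1\<^sub>m d2) = 1\<^sub>m d2"
    using assms(2) unfolding no_trivial_block_at_one_def by blast
  let ?diag = "\<lambda>X Y. four_block_mat X (0\<^sub>m d1 d2) (0\<^sub>m d2 d1) Y"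
  have N1: "M1 - 1\<^sub>m d1 \<in> carrier_mat d1 d1" and N2: "M2 - 1\<^sub>m d2 \<in> carrier_mat d2 d2"
    using M1 M2 by auto
  have N: "?diag M1 M2 - 1\<^sub>m (d1 + d2) = ?diag (M1 - 1\<^sub>m d1) (M2 - 1\<^sub>m d2)"
    using M1 M2 by (intro eq_matI) auto
  have "(?diag M1 M2 - 1\<^sub>m (d1 + d2)) * ?diag Q1 Q2 = ?diag ((M1 - 1\<^sub>m d1) * Q1) ((M2 - 1\<^sub>m d2) * Q2)"
    unfolding N by (subst mult_four_block_mat[OF N1 _ _ N2 Q1 _ _ Q2], insert N1 N2 Q1 Q2, auto)
  moreover have "?diag R1 R2 * (?diag M1 M2 - 1\<^sub>m (d1 + d2)) = ?diag (R1 * (M1 - 1\<^sub>m d1)) (R2 * (M2 - 1\<^sub>m d2))"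
    unfolding N by (subst mult_four_block_mat[OF R1 _ _ R2 N1 _ _ N2], insert N1 N2 R1 R2, auto)
  ultimately have "(?diag M1 M2 - 1\<^sub>m (d1 + d2)) * ?diag Q1 Q2 + ?diag R1 R2 * (?diag M1 M2 - 1\<^sub>m (d1 + d2))
    = 1\<^sub>m (d1 + d2)"
    using e1 e2 N1 N2 Q1 Q2 R1 R2 by (simp add: add_four_block_mat[of _ d1 d1 _ d2 _ d2])
  then show ?thesis
    unfolding no_trivial_block_at_one_def using M1 M2 Q1 Q2 R1 R2
    by (intro exI[of _ "d1 + d2"] exI[of _ "?diag Q1 Q2"] exI[of _ "?diag R1 R2"]) auto
qed

lemma no_trivial_block_at_one_diag_block_mat:
  fixes Ms :: "'a::field mat list"
  assumes "\<And>M. M \<in> set Ms \<Longrightarrow> no_trivial_block_at_one M"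
  shows "no_trivial_block_at_one (diag_block_mat Ms)"
  using assms
proof (induction Ms)
  case Nil
  have "(0\<^sub>m 0 0 - 1\<^sub>m 0) * 0\<^sub>m 0 0 + 0\<^sub>m 0 0 * (0\<^sub>m 0 0 - 1\<^sub>m 0) = (1\<^sub>m 0 :: 'a mat)"
    by (intro eq_matI) auto
  then show ?case unfolding no_trivial_block_at_one_def by fastforce
next
  case (Cons M Ms)
  then show ?case by (simp add: Let_def no_trivial_block_at_one_four_block_diag)
qed

lemma no_trivial_block_at_one_if_det:
  fixes M :: "'a::field mat"
  assumes M: "M \<in> carrier_mat n n" and "det (M - 1\<^sub>m n) \<noteq> 0"
  shows "no_trivial_block_at_one M"
proof -
  have "M - 1\<^sub>m n \<in> carrier_mat n n" using M by auto
  then obtain Q where "Q \<in> carrier_mat n n" "(M - 1\<^sub>m n) * Q = 1\<^sub>m n"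
    using inverse_mat_exists assms(2) by metis
  then show ?thesis unfolding no_trivial_block_at_one_def using M
    by (intro exI[of _ n] exI[of _ Q] exI[of _ "0\<^sub>m n n"]) auto
qed

section \<open>The centralizer of \<open>diag(J, 1)\<close>\<close>

lemma obtain_four_block:
  assumes "X \<in> carrier_mat (k + m) (k + m)"
  obtains A B C D where "A \<in> carrier_mat k k" "B \<in> carrier_mat k m" "C \<in> carrier_mat m k"
    "D \<in> carrier_mat m m" "X = four_block_mat A B C D"
proof -
  obtain A B C D where "split_block X k k = (A, B, C, D)" by (cases "split_block X k k") auto
  from split_block[OF this, of m m] assms show ?thesis using that by auto
qed

lemma four_block_right_inverse_det_nonzero:
  fixes A :: "'a::idom mat"
  assumes A: "A \<in> carrier_mat k k" and B: "B \<in> carrier_mat k m"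
    and C: "C \<in> carrier_mat m k" and D: "D \<in> carrier_mat m m"
    and A': "A' \<in> carrier_mat k k" and B': "B' \<in> carrier_mat k m"
    and C': "C' \<in> carrier_mat m k" and D': "D' \<in> carrier_mat m m"
    and inv: "four_block_mat A B C D * four_block_mat A' B' C' D' = 1\<^sub>m (k + m)"
    and CB': "C * B' = 0\<^sub>m m m" and C'B: "C' * B = 0\<^sub>m m m"
  shows "det A \<noteq> 0" and "det D \<noteq> 0"
proof -
  have "four_block_mat (A * A' + B * C') (A * B' + B * D') (C * A' + D * C') (C * B' + D * D')
    = four_block_mat (1\<^sub>m k) (0\<^sub>m k m) (0\<^sub>m m k) (1\<^sub>m m)"
    using inv by (subst (asm) mult_four_block_mat[OF A B C D A' B' C' D']) simp
  from four_block_mat_inject[of _ k k _ _ m _ _ m, OF _ _ _ _ _ _ _ _ this] A B C D A' B' C' D'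
  have AA': "A * A' + B * C' = 1\<^sub>m k" and DD': "C * B' + D * D' = 1\<^sub>m m" by auto
  have "det D * det D' = 1" using DD' CB' D D' by (simp add: det_mult[symmetric])
  then show "det D \<noteq> 0" by auto
  define E where "E = B * C'"
  have E: "E \<in> carrier_mat k k" unfolding E_def using B C' by auto
  have "E * E = B * (C' * B) * C'"
    unfolding E_def
    using assoc_mult_mat[OF B C' mult_carrier_mat[OF B C']] assoc_mult_mat[OF C' B C']
      assoc_mult_mat[OF B mult_carrier_mat[OF C' B] C'] by simp
  then have EE: "E * E = 0\<^sub>m k k" unfolding C'B using B C' by simp
  have "A * A' = 1\<^sub>m k - E"
  proof (rule eq_matI)
    fix i j assume "i < dim_row (1\<^sub>m k - E)" "j < dim_col (1\<^sub>m k - E)"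
    moreover have "(A * A' + E) $$ (i, j) = 1\<^sub>m k $$ (i, j)" using AA' unfolding E_def by simp
    ultimately show "(A * A') $$ (i, j) = (1\<^sub>m k - E) $$ (i, j)"
      using A A' E by (simp add: algebra_simps)
  qed (use A A' E in auto)
  then have "det A * det A' = det (1\<^sub>m k - E)" using det_mult[OF A A'] by simp
  then show "det A \<noteq> 0" using det_one_minus_square_zero[OF E EE] by auto
qed

lemma centralizer_four_block_diag_one:
  fixes J :: "'a::{field,finite} mat"
  assumes J: "J \<in> carrier_mat k k" and nt: "no_trivial_block_at_one J"
  shows "centralizer (k + m) (four_block_mat J (0\<^sub>m k m) (0\<^sub>m m k) (1\<^sub>m m)) =
    {four_block_mat A B C D | A B C D.
       A \<in> centralizer k J \<and> D \<in> GL m \<and>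
       B \<in> carrier_mat k m \<and> C \<in> carrier_mat m k \<and> J * B = B \<and> C * J = C}"
    (is "centralizer _ ?J = ?R")
proof (intro equalityI subsetI)
  have J': "?J \<in> carrier_mat (k + m) (k + m)" using J by auto
  fix X assume "X \<in> centralizer (k + m) ?J"
  then have X: "X \<in> carrier_mat (k + m) (k + m)" and dX: "det X \<noteq> 0" and XJ: "X * ?J = ?J * X"
    unfolding centralizer_def GL_iff_det by auto
  obtain Y where Y: "Y \<in> carrier_mat (k + m) (k + m)" and XY: "X * Y = 1\<^sub>m (k + m)"
    and "Y * X = 1\<^sub>m (k + m)" using inverse_mat_exists[OF X dX] by blast
  then have YJ: "Y * ?J = ?J * Y" using commute_inverse_mat[OF X Y J' XY] XJ by blast
  obtain A B C D where A: "A \<in> carrier_mat k k" and B: "B \<in> carrier_mat k m"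
    and C: "C \<in> carrier_mat m k" and D: "D \<in> carrier_mat m m" and Xe: "X = four_block_mat A B C D"
    using obtain_four_block[OF X] .
  obtain A' B' C' D' where A': "A' \<in> carrier_mat k k" and B': "B' \<in> carrier_mat k m"
    and C': "C' \<in> carrier_mat m k" and D': "D' \<in> carrier_mat m m" and Ye: "Y = four_block_mat A' B' C' D'"
    using obtain_four_block[OF Y] .
  have AJ: "A * J = J * A" and JB: "J * B = B" and CJ: "C * J = C"
    using XJ unfolding Xe four_block_commute_diag_one_iff[OF J A B C D] by auto
  have JB': "J * B' = B'" and CJ': "C' * J = C'"
    using YJ unfolding Ye four_block_commute_diag_one_iff[OF J A' B' C' D'] by auto
  have "det A \<noteq> 0" "det D \<noteq> 0"
    using four_block_right_inverse_det_nonzero[OF A B C D A' B' C' D' XY[unfolded Xe Ye]]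
      fixed_mult_eq_zero[OF nt J C B' CJ JB'] fixed_mult_eq_zero[OF nt J C' B CJ' JB] by auto
  then show "X \<in> ?R" unfolding Xe centralizer_def GL_iff_det using A B C D AJ JB CJ by blast
next
  fix X assume "X \<in> ?R"
  then obtain A B C D where Xe: "X = four_block_mat A B C D" and A: "A \<in> carrier_mat k k"
    and "det A \<noteq> 0" and AJ: "A * J = J * A" and D: "D \<in> carrier_mat m m" and "det D \<noteq> 0"
    and B: "B \<in> carrier_mat k m" and C: "C \<in> carrier_mat m k" and JB: "J * B = B" and CJ: "C * J = C"
    unfolding centralizer_def GL_iff_det by blast
  moreover obtain A' where A': "A' \<in> carrier_mat k k" and "A * A' = 1\<^sub>m k" and A'A: "A' * A = 1\<^sub>m k"
    using inverse_mat_exists[OF A \<open>det A \<noteq> 0\<close>] by blast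
  moreover have "C * A' * J = C * A'"
  proof -
    have "C * A' * J = C * (J * A')"
      using commute_inverse_mat[OF A A' J \<open>A * A' = 1\<^sub>m k\<close> A'A AJ] A' C J by simp
    also have "\<dots> = C * A'" using A' C J CJ by (simp flip: assoc_mult_mat[of C m k J k A' k])
    finally show ?thesis .
  qed
  then have "C * A' * B = 0\<^sub>m m m" using fixed_mult_eq_zero[OF nt J _ B _ JB] C A' by auto
  ultimately have "det X \<noteq> 0"
    using det_four_block_mat_schur_zero[OF A A' A'A B C D] by simp
  moreover have "X * ?J = ?J * X" unfolding Xe four_block_commute_diag_one_iff[OF J A B C D]
    using AJ JB CJ by simp
  ultimately show "X \<in> centralizer (k + m) ?J"
    unfolding centralizer_def GL_iff_det Xe using A B C D by auto
qed

section \<open>Jordan blocks\<close>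

lemma dim_companion [simp]:
  "dim_row (companion f) = degree f" "dim_col (companion f) = degree f"
  by (simp_all add: companion_def Let_def)

lemma dim_jblock [simp]:
  "dim_row (jblock f p) = degree f * p" "dim_col (jblock f p) = degree f * p"
  by (simp_all add: jblock_def Let_def)

lemma jblock_carrier_mat: "jblock f p \<in> carrier_mat (degree f * p) (degree f * p)"
  by (simp add: carrier_matI)

lemma jblock_Suc:
  fixes f :: "'a::{field,finite} poly"
  assumes d: "0 < degree f"
  shows "jblock f (Suc p) = four_block_mat (companion f)
     (mat (degree f) (degree f * p) (\<lambda>(i, j). if i = j then 1 else 0))
     (0\<^sub>m (degree f * p) (degree f)) (jblock f p)"
  (is "_ = ?F")
proof (rule eq_matI)
  let ?d = "degree f"
  fix i j assume "i < dim_row ?F" "j < dim_col ?F"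
  then have i: "i < ?d + ?d * p" and j: "j < ?d + ?d * p" by simp_all
  have shift: "x div ?d = (x - ?d) div ?d + 1" "x mod ?d = (x - ?d) mod ?d" if "\<not> x < ?d" for x
    using that d by (simp_all add: le_div_geq le_mod_geq)
  show "jblock f (Suc p) $$ (i, j) = ?F $$ (i, j)"
    using i j d shift[of i] shift[of j]
    by (cases "i < ?d"; cases "j < ?d") (auto simp: jblock_def Let_def div_eq_0_iff)
qed simp_all

lemma companion_minus_one_mult_vec_nth:
  fixes f :: "'a::{field,finite} poly"
  assumes i: "i < degree f" and v: "v \<in> carrier_vec (degree f)"
  shows "((companion f - 1\<^sub>m (degree f)) *\<^sub>v v) $ i =
    (if i + 1 = degree f then - (\<Sum>j<degree f. coeff f j * v $ j) else v $ (i + 1)) - v $ i"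
proof -
  have "((companion f - 1\<^sub>m (degree f)) *\<^sub>v v) $ i = (\<Sum>j<degree f.
      (if i + 1 = degree f then - coeff f j * v $ j else if j = i + 1 then v $ j else 0)
      - (if j = i then v $ j else 0))"
    using i v by (auto simp: mult_mat_vec_def scalar_prod_def lessThan_atLeast0 companion_def
        Let_def algebra_simps intro!: sum.cong)
  also have "\<dots> = (if i + 1 = degree f then - (\<Sum>j<degree f. coeff f j * v $ j) else v $ (i + 1))
      - v $ i"
    using i by (simp add: sum_subtractf sum.delta' sum_negf)
  finally show ?thesis .
qed

lemma poly_one_eq_sum_coeff:
  fixes f :: "'a::comm_semiring_1 poly"
  assumes "lead_coeff f = 1"
  shows "poly f 1 = (\<Sum>j<degree f. coeff f j) + 1"
proof -
  have "poly f 1 = (\<Sum>j<Suc (degree f). coeff f j)"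
    unfolding lessThan_Suc_atMost by (simp add: poly_altdef)
  then show ?thesis by (simp only: sum.lessThan_Suc assms)
qed

text \<open>A fixed vector of the companion matrix is constant, \<open>v = (c, \<dots>, c)\<close>, and its last
  coordinate then reads \<open>c * poly f 1 = 0\<close>.\<close>
lemma det_companion_minus_one_nonzero:
  fixes f :: "'a::{field,finite} poly"
  assumes d: "0 < degree f" and monic: "lead_coeff f = 1" and "poly f 1 \<noteq> 0"
  shows "det (companion f - 1\<^sub>m (degree f)) \<noteq> 0"
proof
  let ?d = "degree f"
  assume "det (companion f - 1\<^sub>m ?d) = 0"
  then obtain v where v: "v \<in> carrier_vec ?d" and "v \<noteq> 0\<^sub>v ?d"
    and fixed: "(companion f - 1\<^sub>m ?d) *\<^sub>v v = 0\<^sub>v ?d"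
    using det_0_iff_vec_prod_zero_field[OF minus_carrier_mat[OF one_carrier_mat]] by auto
  have row: "((companion f - 1\<^sub>m ?d) *\<^sub>v v) $ i = 0" if "i < ?d" for i
    using fixed that by simp
  have const: "v $ i = v $ 0" if "i < ?d" for i
    using that
  proof (induction i)
    case (Suc i)
    then have "v $ (i + 1) - v $ i = 0"
      using row[of i] companion_minus_one_mult_vec_nth[OF _ v, of i] by simp
    then show ?case using Suc by simp
  qed simp
  define c where "c = v $ 0"
  have "((companion f - 1\<^sub>m ?d) *\<^sub>v v) $ (?d - 1) = - (\<Sum>j<?d. coeff f j * v $ j) - v $ (?d - 1)"
    using d companion_minus_one_mult_vec_nth[OF _ v, of "?d - 1"] by simp
  also have "\<dots> = - (c * poly f 1)"
    using d const unfolding c_def[symmetric]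
    by (simp add: poly_one_eq_sum_coeff[OF monic] sum_distrib_left algebra_simps)
  finally have "c * poly f 1 = 0" using row[of "?d - 1"] d by simp
  then have "c = 0" using \<open>poly f 1 \<noteq> 0\<close> by simp
  then have "v = 0\<^sub>v ?d" using const v unfolding c_def[symmetric] by (intro eq_vecI) auto
  with \<open>v \<noteq> 0\<^sub>v ?d\<close> show False by simp
qed

lemma det_jblock_minus_one_nonzero:
  fixes f :: "'a::{field,finite} poly"
  assumes "0 < degree f" and "lead_coeff f = 1" and "poly f 1 \<noteq> 0"
  shows "det (jblock f p - 1\<^sub>m (degree f * p)) \<noteq> 0"
proof (induction p)
  case 0
  have "jblock f 0 - 1\<^sub>m (degree f * 0) = 1\<^sub>m 0" by (intro eq_matI) auto
  then show ?case by simp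
next
  case (Suc p)
  let ?d = "degree f"
  let ?E = "mat ?d (?d * p) (\<lambda>(i, j). if i = j then 1 else (0::'a))"
  have "jblock f (Suc p) - 1\<^sub>m (?d * Suc p) =
    four_block_mat (companion f - 1\<^sub>m ?d) ?E (0\<^sub>m (?d * p) ?d) (jblock f p - 1\<^sub>m (?d * p))"
    unfolding jblock_Suc[OF assms(1)] by (intro eq_matI) auto
  also have "det \<dots> = det (companion f - 1\<^sub>m ?d) * det (jblock f p - 1\<^sub>m (?d * p))"
    by (rule det_four_block_mat_lower_left_zero) (auto intro!: carrier_matI)
  finally show ?case using Suc det_companion_minus_one_nonzero[OF assms] by simp
qed

text \<open>With \<open>N\<close> the nilpotent shift, \<open>N * N\<^sup>T\<close> is the identity except for the last diagonal
  entry, which \<open>R * N\<close> supplies; this needs a second row, i.e. \<open>m \<ge> 2\<close>.\<close>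
lemma no_trivial_block_at_one_jblock_tm1:
  assumes m: "2 \<le> m"
  shows "no_trivial_block_at_one (jblock (tm1::'a::{field,finite} poly) m)"
proof -
  define N :: "'a mat" where "N = mat m m (\<lambda>(i, j). if j = i + 1 then 1 else 0)"
  define Q :: "'a mat" where "Q = mat m m (\<lambda>(i, j). if i = j + 1 then 1 else 0)"
  define R :: "'a mat" where "R = mat m m (\<lambda>(i, j). if i = m - 1 \<and> j = m - 2 then 1 else 0)"
  have N: "jblock tm1 m - 1\<^sub>m m = N"
    unfolding N_def by (intro eq_matI) (auto simp: jblock_def companion_def Let_def)
  have "(jblock tm1 m - 1\<^sub>m m) * Q + R * (jblock tm1 m - 1\<^sub>m m) = 1\<^sub>m m"
    unfolding N
  proof (rule eq_matI)
    fix i j assume "i < dim_row (1\<^sub>m m :: 'a mat)" "j < dim_col (1\<^sub>m m :: 'a mat)"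
    then have ij: "i < m" "j < m" by auto
    have "(N * Q) $$ (i, j) = (if i = j \<and> i + 1 < m then 1 else 0)"
      using ij unfolding N_def Q_def
      by (simp add: scalar_prod_def lessThan_atLeast0 if_distrib[of "\<lambda>x. x * _"] sum.delta' cong: if_cong)
    moreover have "(R * N) $$ (i, j) = (if i = m - 1 \<and> j = m - 1 then 1 else 0)"
      using ij m unfolding N_def R_def
      by (auto simp: scalar_prod_def lessThan_atLeast0 if_distrib[of "\<lambda>x. x * _"] sum.delta' cong: if_cong)
    ultimately show "(N * Q + R * N) $$ (i, j) = 1\<^sub>m m $$ (i, j)"
      using ij unfolding N_def Q_def R_def by auto
  qed (auto simp: N_def Q_def R_def)
  moreover have "Q \<in> carrier_mat m m" "R \<in> carrier_mat m m" unfolding Q_def R_def by auto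
  ultimately show ?thesis
    unfolding no_trivial_block_at_one_def using jblock_carrier_mat[of tm1 m] by auto
qed

lemma Phi_degree_pos:
  assumes "f \<in> Phi" shows "0 < degree f"
  using assms unfolding Phi_def irreducible_def by (auto simp: is_unit_iff_degree)

lemma Phi_poly_one_nonzero:
  fixes f :: "'a::{field,finite} poly"
  assumes f: "f \<in> Phi" and "f \<noteq> tm1"
  shows "poly f 1 \<noteq> 0"
proof
  assume "poly f 1 = 0"
  then obtain g where fg: "f = tm1 * g" using poly_eq_0_iff_dvd by (metis dvdE)
  have "irreducible f" and monic: "lead_coeff f = 1" using f unfolding Phi_def by auto
  moreover have "\<not> is_unit (tm1 :: 'a poly)" by (simp add: is_unit_iff_degree)
  ultimately have "is_unit g" using fg irreducibleD by blast
  then have "degree g = 0" by (metis is_unit_iff_degree not_is_unit_0)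
  moreover have "lead_coeff g = 1" using monic unfolding fg lead_coeff_mult by simp
  ultimately have "g = 1" by (metis degree_0_id one_pCons)
  then show False using fg \<open>f \<noteq> tm1\<close> by simp
qed

lemma no_trivial_block_at_one_jblock_Phi:
  fixes f :: "'a::{field,finite} poly"
  assumes "f \<in> Phi" and "f \<noteq> tm1"
  shows "no_trivial_block_at_one (jblock f p)"
proof (rule no_trivial_block_at_one_if_det[OF jblock_carrier_mat])
  have "lead_coeff f = 1" using assms(1) unfolding Phi_def by simp
  then show "det (jblock f p - 1\<^sub>m (degree f * p)) \<noteq> 0"
    using det_jblock_minus_one_nonzero Phi_degree_pos Phi_poly_one_nonzero assms by blast
qed

section \<open>The matrices \<open>J\<^bsub>\<mu>\<up>n\<^esub>\<close>\<close>

definition lifted_blocks :: "('a::{field,finite} poly \<Rightarrow> nat list) \<Rightarrow> 'a mat list" where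
  "lifted_blocks mu = concat (map (\<lambda>f. map (jblock f) (mu f)) (nonunip_list mu))
     @ map (jblock tm1) (rev (sort (map Suc (mu tm1))))"

lemma nonunip_list:
  assumes "finite (supp lam)"
  shows "distinct (nonunip_list lam)" and "set (nonunip_list lam) = supp lam - {tm1}"
proof -
  obtain xs where "distinct xs \<and> set xs = supp lam - {tm1}"
    using finite_distinct_list[of "supp lam - {tm1}"] assms by auto
  then have "distinct (nonunip_list lam) \<and> set (nonunip_list lam) = supp lam - {tm1}"
    unfolding nonunip_list_def by (rule someI)
  then show "distinct (nonunip_list lam)" and "set (nonunip_list lam) = supp lam - {tm1}" by auto
qed

lemma nonunip_list_up: "nonunip_list (up j mu) = nonunip_list mu"
proof -
  have "supp (up j mu) - {tm1} = supp mu - {tm1}" unfolding supp_def up_def by auto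
  then show ?thesis unfolding nonunip_list_def by simp
qed

lemma rev_sort_map_Suc_append_ones:
  "rev (sort (map Suc xs @ replicate r 1)) = rev (sort (map Suc xs)) @ replicate r 1"
proof -
  have "sort (map Suc xs @ replicate r 1) = replicate r 1 @ sort (map Suc xs)"
    by (rule properties_for_sort) (auto simp: sorted_append)
  then show ?thesis by simp
qed

lemma diag_block_mat_replicate_jblock_tm1:
  "diag_block_mat (replicate r (jblock (tm1::'a::{field,finite} poly) 1)) = 1\<^sub>m r"
proof -
  have "jblock (tm1::'a poly) 1 = 1\<^sub>m 1"
    by (intro eq_matI) (auto simp: jblock_def companion_def)
  then show ?thesis
    by (induction r) (auto intro!: eq_matI simp: Let_def four_block_one_mat[of 1, simplified])
qed

lemma Jmat_up:
  fixes mu :: "'a::{field,finite} poly \<Rightarrow> nat list"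
  assumes mu: "mu \<in> PPhi" and k: "k = pnorm mu + length (mu tm1)"
  shows "Jmat (up j mu) = diag_block_mat (lifted_blocks mu @ replicate (j - k) (jblock tm1 1))"
proof -
  have non_unip: "map (\<lambda>f. map (jblock f) (up j mu f)) (nonunip_list mu) =
    map (\<lambda>f. map (jblock f) (mu f)) (nonunip_list mu)"
    using nonunip_list(2)[of mu] mu unfolding PPhi_def up_def by auto
  have unip: "up j mu tm1 = map Suc (mu tm1) @ replicate (j - k) 1"
    unfolding up_def k by (simp add: diff_diff_add add.commute)
  show ?thesis
    unfolding Jmat_def lifted_blocks_def nonunip_list_up non_unip unip rev_sort_map_Suc_append_ones
    by simp
qed

lemma pnorm_eq:
  assumes "finite (supp mu)"
  shows "pnorm mu = (\<Sum>f\<in>supp mu - {tm1}. degree f * sum_list (mu f)) + sum_list (mu tm1)"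
proof (cases "tm1 \<in> supp mu")
  case True
  then show ?thesis unfolding pnorm_def
    using sum.remove[OF assms True, of "\<lambda>f. degree f * sum_list (mu f)"] by simp
next
  case False
  then show ?thesis unfolding pnorm_def supp_def by simp
qed

lemma sum_list_sort: "sum_list (sort xs) = sum_list (xs :: 'a::{linorder,comm_monoid_add} list)"
  by (metis mset_sort sum_mset_sum_list)

lemma sum_list_map_Suc: "sum_list (map Suc xs) = sum_list xs + length xs"
  by (induction xs) auto

lemma lifted_blocks_carrier_mat:
  fixes mu :: "'a::{field,finite} poly \<Rightarrow> nat list"
  assumes mu: "mu \<in> PPhi" and k: "k = pnorm mu + length (mu tm1)"
  shows "diag_block_mat (lifted_blocks mu) \<in> carrier_mat k k"
proof -
  have fin: "finite (supp mu)" using mu unfolding PPhi_def by simp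
  have "sum_list (map dim_row (concat (map (\<lambda>f. map (jblock f) (mu f)) L))) =
    (\<Sum>f\<leftarrow>L. degree f * sum_list (mu f))" for L :: "'a poly list"
    by (induction L) (simp_all add: o_def sum_list_const_mult)
  also have "(\<Sum>f\<leftarrow>nonunip_list mu. degree f * sum_list (mu f)) =
    (\<Sum>f\<in>supp mu - {tm1}. degree f * sum_list (mu f))"
    using sum_list_distinct_conv_sum_set[OF nonunip_list(1)[OF fin]] nonunip_list(2)[OF fin] by simp
  finally have non_unip:
    "sum_list (map dim_row (concat (map (\<lambda>f. map (jblock f) (mu f)) (nonunip_list mu)))) =
     (\<Sum>f\<in>supp mu - {tm1}. degree f * sum_list (mu f))" .
  have "sum_list (map dim_row (map (jblock (tm1::'a poly)) (rev (sort (map Suc (mu tm1)))))) =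
    sum_list (sort (map Suc (mu tm1)))" by (simp add: o_def)
  also have "\<dots> = sum_list (mu tm1) + length (mu tm1)" by (simp only: sum_list_sort sum_list_map_Suc)
  finally have unip:
    "sum_list (map dim_row (map (jblock (tm1::'a poly)) (rev (sort (map Suc (mu tm1)))))) =
     sum_list (mu tm1) + length (mu tm1)" .
  have "sum_list (map dim_row (lifted_blocks mu)) = k"
    unfolding lifted_blocks_def map_append sum_list_append non_unip unip k pnorm_eq[OF fin]
    by (simp only: add.assoc)
  moreover have "map dim_col (lifted_blocks mu) = map dim_row (lifted_blocks mu)"
    unfolding lifted_blocks_def by (simp add: o_def)
  ultimately show ?thesis by (intro carrier_matI) (simp_all only: dim_diag_block_mat)
qed

lemma no_trivial_block_at_one_lifted_blocks:
  fixes mu :: "'a::{field,finite} poly \<Rightarrow> nat list"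
  assumes mu: "mu \<in> PPhi"
  shows "no_trivial_block_at_one (diag_block_mat (lifted_blocks mu))"
proof (rule no_trivial_block_at_one_diag_block_mat)
  fix M assume "M \<in> set (lifted_blocks mu)"
  then consider f p where "f \<in> set (nonunip_list mu)" "M = jblock f p"
    | p where "p \<in> set (mu tm1)" "M = jblock tm1 (Suc p)"
    unfolding lifted_blocks_def by auto
  then show "no_trivial_block_at_one M"
  proof cases
    case 1
    then show ?thesis using mu nonunip_list(2)[of mu]
      by (auto simp: PPhi_def intro!: no_trivial_block_at_one_jblock_Phi)
  next
    case 2
    have "0 \<notin> set (mu tm1)" using mu unfolding PPhi_def is_partition_def by blast
    then have "p \<noteq> 0" using 2(1) by metis
    then show ?thesis using 2 by (auto intro!: no_trivial_block_at_one_jblock_tm1)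
  qed
qed

theorem proposition2p5:
  fixes mu :: "'a::{field,finite} poly \<Rightarrow> nat list" and n k :: nat
  assumes "mu \<in> PPhi"
    and "k = pnorm mu + length (mu tm1)"
    and "k \<le> n"
  shows "centralizer n (Jmat (up n mu)) =
    {four_block_mat A B C D | A B C D.
       A \<in> centralizer k (Jmat (up k mu)) \<and> D \<in> GL (n - k) \<and>
       B \<in> carrier_mat k (n - k) \<and> C \<in> carrier_mat (n - k) k \<and>
       Jmat (up k mu) * B = B \<and> C * Jmat (up k mu) = C}"
proof -
  define J where "J = diag_block_mat (lifted_blocks mu)"
  have J: "J \<in> carrier_mat k k"
    unfolding J_def using lifted_blocks_carrier_mat assms(1,2) by blast
  have "Jmat (up k mu) = J" unfolding J_def Jmat_up[OF assms(1,2)] by simp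
  moreover have "Jmat (up n mu) = four_block_mat J (0\<^sub>m k (n - k)) (0\<^sub>m (n - k) k) (1\<^sub>m (n - k))"
    unfolding Jmat_up[OF assms(1,2)] diag_block_mat_append diag_block_mat_replicate_jblock_tm1
    using J by (simp add: J_def Let_def)
  moreover have "n = k + (n - k)" using assms(3) by simp
  ultimately show ?thesis
    using centralizer_four_block_diag_one[OF J, of "n - k"]
      no_trivial_block_at_one_lifted_blocks[OF assms(1), folded J_def] by metis
qed

end
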